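(* Let $a,c,d,\gamma\in\mathbb{R}$ with $a>-1$, $a-\gamma c\ge -1$ and $\gamma>0$. If $n$ is an integer with $n\ge 1+\gamma^{-1}$, then $$\Big\lfloor \frac{\lceil a+c+nd\rceil}{n}\Big\rfloor\le \lceil a+d\rceil.$$ *)

theory Defs
  imports Complex_Main
begin
end

theory Submission
  imports Defs
begin

text \<open>The hypotheses on \<open>\<gamma>\<close> only serve to give \<open>c \<le> (n - 1) (a + 1)\<close>. With this,
  \<open>a + c + n d \<le> n (a + d) + n - 1 \<le> n \<lceil>a + d\<rceil> + n - 1\<close>, so the integer
  \<open>\<lceil>a + c + n d\<rceil>\<close> is smaller than \<open>n (\<lceil>a + d\<rceil> + 1)\<close> and its quotient by \<open>n\<close>
  rounds down to at most \<open>\<lceil>a + d\<rceil>\<close>.\<close>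

lemma floor_of_int_divide_le_if_less_mult:
  fixes k n m :: int
  assumes "0 < n" and "k < n * (m + 1)"
  shows "\<lfloor>of_int k / of_int n :: 'a :: floor_ceiling\<rfloor> \<le> m"
proof -
  have "n * (k div n) \<le> k"
    using assms(1) by (metis le_add_same_cancel1 div_mult_mod_eq mult.commute pos_mod_sign)
  also have "\<dots> < n * (m + 1)"
    by (fact assms(2))
  finally have "k div n < m + 1"
    using assms(1) by simp
  then show ?thesis
    by (simp add: floor_divide_of_int_eq)
qed

lemma le_mult_add_one_if_scaled_le:
  fixes a c \<gamma> x :: real
  assumes "a > -1" and "\<gamma> > 0" and "\<gamma> * c \<le> a + 1" and "x \<ge> 1 / \<gamma>"
  shows "c \<le> x * (a + 1)"
proof -
  have "c \<le> (a + 1) / \<gamma>"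
    using assms(2,3) by (simp add: pos_le_divide_eq mult.commute)
  also have "\<dots> = 1 / \<gamma> * (a + 1)"
    by simp
  also have "\<dots> \<le> x * (a + 1)"
    using assms(1,4) by (intro mult_right_mono) auto
  finally show ?thesis .
qed

lemma ceiling_add_mult_le:
  fixes a c d :: real and n :: int
  assumes "n > 0" and "c \<le> (of_int n - 1) * (a + 1)"
  shows "\<lceil>a + c + of_int n * d\<rceil> \<le> n * \<lceil>a + d\<rceil> + n - 1"
proof -
  have "a + c + of_int n * d \<le> of_int n * (a + d) + of_int n - 1"
    using assms(2) by (simp add: algebra_simps)
  also have "\<dots> \<le> of_int n * of_int \<lceil>a + d\<rceil> + of_int n - 1"
    using assms(1) by (simp add: mult_left_mono)
  finally have "a + c + of_int n * d \<le> of_int (n * \<lceil>a + d\<rceil> + n - 1)"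
    by simp
  then show ?thesis
    by (rule ceiling_le)
qed

theorem lemma1p3:
  fixes a c d \<gamma> :: real and n :: int
  assumes "a > -1" and "a - \<gamma> * c \<ge> -1" and "\<gamma> > 0"
    and "real_of_int n \<ge> 1 + 1 / \<gamma>"
  shows "\<lfloor>real_of_int \<lceil>a + c + real_of_int n * d\<rceil> / real_of_int n\<rfloor> \<le> \<lceil>a + d\<rceil>"
proof -
  have "1 / \<gamma> > 0"
    using assms(3) by simp
  with assms(4) have "n > 0"
    by linarith
  have "c \<le> (of_int n - 1) * (a + 1)"
    using assms by (intro le_mult_add_one_if_scaled_le[where \<gamma> = \<gamma>]) auto
  with \<open>n > 0\<close> have "\<lceil>a + c + of_int n * d\<rceil> \<le> n * \<lceil>a + d\<rceil> + n - 1"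
    by (rule ceiling_add_mult_le)
  then have "\<lceil>a + c + of_int n * d\<rceil> < n * (\<lceil>a + d\<rceil> + 1)"
    by (simp add: algebra_simps)
  with \<open>n > 0\<close> show ?thesis
    by (rule floor_of_int_divide_le_if_less_mult)
qed

end
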